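(* Let $\tau_i$ be a task with period $p_i$ and execution time $c_i$, and let $\omega_k$ be a busy interval of length $l_k$ in a schedule as described in the context. Let $N\ge 0$ be an integer. (i) If $(Np_i-c_i)^+\le l_k<Np_i+c_i$, where $x^+=\max(x,0)$, then $\omega_k$ contains exactly $N$ jobs of $\tau_i$. (ii) If $Np_i+c_i\le l_k<(N+1)p_i-c_i$, then $\omega_k$ contains either $N$ or $N+1$ jobs of $\tau_i$.
   Context: Model: a single processor runs a set of periodic tasks $\tau_1,\dots,\tau_n$ under a preemptive, work-conserving, fixed-priority scheduler. Work-conserving means the processor is never idle while some released job is unfinished. Each task $\tau_i$ has a period $p_i>0$, a constant execution time $c_i$ with $0<c_i\le p_i$, an initial arrival time (offset) $a_i$, and a distinct fixed priority. Its $h$-th job is released at time $\sigma^{\tau_i}_h=a_i+hp_i$, for every $h\in\mathbb{Z}$; the schedule is considered as running forever in both directions of time. Each job needs exactly $c_i$ units of processor time. The schedule is assumed feasible, meaning every busy interval has finite length. A busy interval is a maximal time interval $[\alpha,\beta)$ during which the processor is continuously executing jobs. Its length is $l=\beta-\alpha$. Distinct busy intervals are separated by idle time. A busy interval contains a job if that job executes during it. Equivalently, the number of jobs of $\tau_i$ contained in $[\alpha,\beta)$ equals $|\{h\in\mathbb{Z}:\sigma^{\tau_i}_h\in[\alpha,\beta)\}|$. *)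

theory Defs
  imports "HOL-Analysis.Analysis"
begin

text \<open>A schedule S maps each time
  instant to the job (i, h) (task index, job index) executing at that instant,
  or None if the processor is idle. Priorities: a smaller value of prio means
  a higher priority.\<close>

definition release :: "(nat \<Rightarrow> real) \<Rightarrow> (nat \<Rightarrow> real) \<Rightarrow> nat \<Rightarrow> int \<Rightarrow> real" where
  "release p a i h = a i + real_of_int h * p i"

definition executed_before :: "(real \<Rightarrow> (nat \<times> int) option) \<Rightarrow> nat \<Rightarrow> int \<Rightarrow> real \<Rightarrow> ennreal" where
  "executed_before S i h t = emeasure lborel ({s. S s = Some (i, h)} \<inter> {..<t})"

definition pending ::
  "nat \<Rightarrow> (nat \<Rightarrow> real) \<Rightarrow> (nat \<Rightarrow> real) \<Rightarrow> (nat \<Rightarrow> real) \<Rightarrow> (real \<Rightarrow> (nat \<times> int) option)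
    \<Rightarrow> nat \<Rightarrow> int \<Rightarrow> real \<Rightarrow> bool" where
  "pending n p c a S i h t \<longleftrightarrow>
     i < n \<and> release p a i h \<le> t \<and> executed_before S i h t < ennreal (c i)"

text \<open>A preemptive, work-conserving, fixed-priority schedule of the periodic
  task set (p, c, a, prio) running forever in both directions of time, that is
  feasible (every busy interval has finite length).\<close>
definition valid_fp_schedule ::
  "nat \<Rightarrow> (nat \<Rightarrow> real) \<Rightarrow> (nat \<Rightarrow> real) \<Rightarrow> (nat \<Rightarrow> real) \<Rightarrow> (nat \<Rightarrow> nat)
    \<Rightarrow> (real \<Rightarrow> (nat \<times> int) option) \<Rightarrow> bool" where
  "valid_fp_schedule n p c a prio S \<longleftrightarrow>
     (\<forall>i<n. 0 < p i \<and> 0 < c i \<and> c i \<le> p i) \<and>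
     inj_on prio {..<n} \<and>
     \<comment> \<open>each job executes only on a measurable set, receiving exactly c_i units\<close>
     (\<forall>i h. {s. S s = Some (i, h)} \<in> sets lborel) \<and>
     (\<forall>i h. i < n \<longrightarrow> emeasure lborel {s. S s = Some (i, h)} = ennreal (c i)) \<and>
     \<comment> \<open>only released, unfinished jobs execute, and the executing job has the highest
         priority among pending jobs (preemptive fixed priority)\<close>
     (\<forall>t i h. S t = Some (i, h) \<longrightarrow>
        pending n p c a S i h t \<and> (\<forall>j g. pending n p c a S j g t \<longrightarrow> prio i \<le> prio j)) \<and>
     \<comment> \<open>work conserving\<close>
     (\<forall>t. (\<exists>i h. pending n p c a S i h t) \<longrightarrow> S t \<noteq> None) \<and>
     \<comment> \<open>feasible: no busy interval of infinite length\<close>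
     (\<forall>x. (\<exists>y\<ge>x. S y = None) \<and> (\<exists>y\<le>x. S y = None))"

definition busy_interval :: "(real \<Rightarrow> (nat \<times> int) option) \<Rightarrow> real \<Rightarrow> real \<Rightarrow> bool" where
  "busy_interval S \<alpha> \<beta> \<longleftrightarrow>
     \<alpha> < \<beta> \<and> (\<forall>t\<in>{\<alpha>..<\<beta>}. S t \<noteq> None) \<and>
     (\<forall>x y. x \<le> \<alpha> \<longrightarrow> \<beta> \<le> y \<longrightarrow> (\<forall>t\<in>{x..<y}. S t \<noteq> None) \<longrightarrow> x = \<alpha> \<and> y = \<beta>)"

definition jobs_in :: "(nat \<Rightarrow> real) \<Rightarrow> (nat \<Rightarrow> real) \<Rightarrow> nat \<Rightarrow> real \<Rightarrow> real \<Rightarrow> nat" where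
  "jobs_in p a i \<alpha> \<beta> = card {h::int. release p a i h \<in> {\<alpha>..<\<beta>}}"

end

theory Submission
  imports Defs
begin

text \<open>The processor idles only when no job is pending, so at any idle instant every job
  released earlier has already received its full execution time. Busy intervals are
  bounded by idle instants, hence a job released inside \<open>[\<alpha>, \<beta>)\<close> completes by \<open>\<beta>\<close>, and a
  job released before \<open>\<alpha>\<close> completes strictly before \<open>\<alpha>\<close>. If \<open>[\<alpha>, \<beta>)\<close> contains \<open>M + 1\<close>
  releases of \<open>\<tau>\<^sub>i\<close>, the last lies at least \<open>M p\<^sub>i\<close> after \<open>\<alpha>\<close> and completes by \<open>\<beta>\<close>, so
  \<open>l \<ge> M p\<^sub>i + c\<^sub>i\<close>. Conversely, the last release before \<open>\<alpha>\<close> lies more than \<open>c\<^sub>i\<close> before \<open>\<alpha>\<close>,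
  so if \<open>l \<ge> N p\<^sub>i - c\<^sub>i\<close> the next \<open>N\<close> releases all fall into \<open>[\<alpha>, \<beta>)\<close>. The two bounds
  together pin down the number of jobs as claimed.\<close>

lemma release_le_imp_completed_at_idle:
  assumes V: "valid_fp_schedule n p c a prio S" and i: "i < n"
    and idle: "S t = None" and released: "release p a i h \<le> t"
  shows "release p a i h + c i \<le> t"
proof -
  have "\<not> pending n p c a S i h t"
    using V idle unfolding valid_fp_schedule_def by blast
  hence finished: "ennreal (c i) \<le> executed_before S i h t"
    using i released unfolding pending_def by auto
  have "{s. S s = Some (i, h)} \<inter> {..<t} \<subseteq> {release p a i h..<t}"
  proof
    fix s assume "s \<in> {s. S s = Some (i, h)} \<inter> {..<t}"
    hence "S s = Some (i, h)" "s < t" by auto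
    hence "pending n p c a S i h s" using V unfolding valid_fp_schedule_def by blast
    thus "s \<in> {release p a i h..<t}" using \<open>s < t\<close> unfolding pending_def by auto
  qed
  hence "executed_before S i h t \<le> emeasure lborel {release p a i h..<t}"
    unfolding executed_before_def by (rule emeasure_mono) simp
  also have "\<dots> = ennreal (t - release p a i h)" using released by simp
  finally have "ennreal (c i) \<le> ennreal (t - release p a i h)"
    using finished by (rule order_trans[rotated])
  thus ?thesis using released by (simp add: ennreal_le_iff)
qed

lemma busy_interval_idle_at_or_after_end:
  assumes B: "busy_interval S \<alpha> \<beta>" and "0 < e"
  obtains t where "\<beta> \<le> t" "t < \<beta> + e" "S t = None"
proof -
  have "\<not> (\<forall>t\<in>{\<alpha>..<\<beta> + e}. S t \<noteq> None)"
  proof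
    assume "\<forall>t\<in>{\<alpha>..<\<beta> + e}. S t \<noteq> None"
    hence "\<beta> + e = \<beta>"
      using B \<open>0 < e\<close> unfolding busy_interval_def by (meson le_add_same_cancel1 less_imp_le order_refl)
    thus False using \<open>0 < e\<close> by simp
  qed
  then obtain t where t: "\<alpha> \<le> t" "t < \<beta> + e" "S t = None" by (meson atLeastLessThan_iff)
  with B have "\<beta> \<le> t" unfolding busy_interval_def by (meson atLeastLessThan_iff not_le)
  with t that show ?thesis by blast
qed

lemma busy_interval_idle_before_start:
  assumes B: "busy_interval S \<alpha> \<beta>" and "x < \<alpha>"
  obtains t where "x \<le> t" "t < \<alpha>" "S t = None"
proof -
  have "\<not> (\<forall>t\<in>{x..<\<beta>}. S t \<noteq> None)"
  proof
    assume "\<forall>t\<in>{x..<\<beta>}. S t \<noteq> None"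
    hence "x = \<alpha>" using B \<open>x < \<alpha>\<close> unfolding busy_interval_def by (meson less_imp_le order_refl)
    thus False using \<open>x < \<alpha>\<close> by simp
  qed
  then obtain t where t: "x \<le> t" "t < \<beta>" "S t = None" by (meson atLeastLessThan_iff)
  with B have "t < \<alpha>" unfolding busy_interval_def by (meson atLeastLessThan_iff not_le)
  with t that show ?thesis by blast
qed

lemma release_before_busy_interval_end_completes:
  assumes V: "valid_fp_schedule n p c a prio S" and i: "i < n"
    and B: "busy_interval S \<alpha> \<beta>" and "release p a i h < \<beta>"
  shows "release p a i h + c i \<le> \<beta>"
proof (rule field_le_epsilon)
  fix e :: real assume "0 < e"
  then obtain t where t: "\<beta> \<le> t" "t < \<beta> + e" "S t = None"
    using busy_interval_idle_at_or_after_end[OF B] by blast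
  have "release p a i h + c i \<le> t"
    using release_le_imp_completed_at_idle[OF V i t(3)] \<open>release p a i h < \<beta>\<close> t(1) by simp
  thus "release p a i h + c i \<le> \<beta> + e" using t(2) by simp
qed

lemma release_before_busy_interval_completes:
  assumes V: "valid_fp_schedule n p c a prio S" and i: "i < n"
    and B: "busy_interval S \<alpha> \<beta>" and "release p a i h < \<alpha>"
  shows "release p a i h + c i < \<alpha>"
proof -
  obtain t where t: "release p a i h \<le> t" "t < \<alpha>" "S t = None"
    using busy_interval_idle_before_start[OF B \<open>release p a i h < \<alpha>\<close>] .
  thus ?thesis using release_le_imp_completed_at_idle[OF V i t(3) t(1)] by simp
qed

lemma finite_releases_in_interval:
  assumes p: "0 < p i"
  shows "finite {h::int. release p a i h \<in> {\<alpha>..<\<beta>}}"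
proof (rule finite_subset)
  show "{h::int. release p a i h \<in> {\<alpha>..<\<beta>}}
      \<subseteq> {\<lfloor>(\<alpha> - a i) / p i\<rfloor> .. \<lceil>(\<beta> - a i) / p i\<rceil>}"
  proof
    fix h assume "h \<in> {h::int. release p a i h \<in> {\<alpha>..<\<beta>}}"
    hence h: "\<alpha> \<le> a i + of_int h * p i" "a i + of_int h * p i < \<beta>"
      unfolding release_def by auto
    have "(\<alpha> - a i) / p i \<le> of_int h" using h p by (simp add: divide_le_eq)
    moreover have "of_int h \<le> (\<beta> - a i) / p i" using h p by (simp add: le_divide_eq)
    ultimately show "h \<in> {\<lfloor>(\<alpha> - a i) / p i\<rfloor> .. \<lceil>(\<beta> - a i) / p i\<rceil>}"
      by (simp add: floor_le_iff le_ceiling_iff)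
  qed
qed simp

lemma card_le_Max_minus_Min:
  fixes H :: "int set"
  assumes "finite H" "H \<noteq> {}"
  shows "int (card H) \<le> Max H - Min H + 1"
proof -
  have "card H \<le> card {Min H..Max H}"
    using assms by (intro card_mono) auto
  moreover have "Min H \<le> Max H" using assms by simp
  ultimately show ?thesis by simp
qed

lemma busy_interval_length_ge_if_jobs_in:
  assumes V: "valid_fp_schedule n p c a prio S" and i: "i < n"
    and B: "busy_interval S \<alpha> \<beta>" and M: "M + 1 \<le> jobs_in p a i \<alpha> \<beta>"
  shows "real M * p i + c i \<le> \<beta> - \<alpha>"
proof -
  define H where "H = {h::int. release p a i h \<in> {\<alpha>..<\<beta>}}"
  have p: "0 < p i" using V i unfolding valid_fp_schedule_def by auto
  have fin: "finite H" unfolding H_def using p by (rule finite_releases_in_interval)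
  have card: "M + 1 \<le> card H" using M unfolding jobs_in_def H_def .
  hence ne: "H \<noteq> {}" by auto
  have "real M \<le> of_int (Max H - Min H)"
    using card card_le_Max_minus_Min[OF fin ne] by linarith
  hence "real M * p i \<le> of_int (Max H - Min H) * p i" using p by (simp add: mult_right_mono)
  moreover have "\<alpha> \<le> release p a i (Min H)" "release p a i (Max H) < \<beta>"
    using Min_in[OF fin ne] Max_in[OF fin ne] unfolding H_def by auto
  moreover have "release p a i (Max H) + c i \<le> \<beta>"
    using release_before_busy_interval_end_completes[OF V i B] calculation by blast
  ultimately show ?thesis unfolding release_def by (simp add: algebra_simps)
qed

lemma first_release_in_busy_interval:
  assumes V: "valid_fp_schedule n p c a prio S" and i: "i < n" and B: "busy_interval S \<alpha> \<beta>"
  obtains h0 where "\<alpha> \<le> release p a i h0" "release p a i h0 < \<alpha> + p i - c i"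
proof -
  have p: "0 < p i" using V i unfolding valid_fp_schedule_def by auto
  define h0 where "h0 = \<lceil>(\<alpha> - a i) / p i\<rceil>"
  have "(\<alpha> - a i) / p i \<le> of_int h0" unfolding h0_def by simp
  hence "\<alpha> \<le> release p a i h0" using p unfolding release_def by (simp add: divide_le_eq)
  moreover have "of_int (h0 - 1) < (\<alpha> - a i) / p i" unfolding h0_def by linarith
  hence "release p a i (h0 - 1) < \<alpha>" using p unfolding release_def by (simp add: less_divide_eq)
  hence "release p a i (h0 - 1) + c i < \<alpha>"
    by (rule release_before_busy_interval_completes[OF V i B])
  hence "release p a i h0 < \<alpha> + p i - c i" unfolding release_def by (simp add: algebra_simps)
  ultimately show ?thesis using that by blast
qed

lemma jobs_in_ge_if_busy_interval_length:
  assumes V: "valid_fp_schedule n p c a prio S" and i: "i < n"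
    and B: "busy_interval S \<alpha> \<beta>" and L: "real N * p i - c i \<le> \<beta> - \<alpha>"
  shows "N \<le> jobs_in p a i \<alpha> \<beta>"
proof -
  define H where "H = {h::int. release p a i h \<in> {\<alpha>..<\<beta>}}"
  have p: "0 < p i" using V i unfolding valid_fp_schedule_def by auto
  obtain h0 where first: "\<alpha> \<le> release p a i h0" "release p a i h0 < \<alpha> + p i - c i"
    using first_release_in_busy_interval[OF V i B] .
  have "{h0..h0 + int N - 1} \<subseteq> H"
  proof
    fix k assume k: "k \<in> {h0..h0 + int N - 1}"
    have "of_int h0 * p i \<le> of_int k * p i" using k p by (simp add: mult_right_mono)
    hence "\<alpha> \<le> release p a i k" using first unfolding release_def by simp
    moreover have "of_int k * p i \<le> of_int (h0 + int N - 1) * p i"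
      using k p by (intro mult_right_mono) auto
    hence "release p a i k < \<beta>" using first L unfolding release_def by (simp add: algebra_simps)
    ultimately show "k \<in> H" unfolding H_def by simp
  qed
  hence "card {h0..h0 + int N - 1} \<le> card H"
    using finite_releases_in_interval[of p i, OF p] unfolding H_def by (intro card_mono)
  thus ?thesis unfolding jobs_in_def H_def by simp
qed

theorem theorem1:
  fixes n :: nat and p c a :: "nat \<Rightarrow> real" and prio :: "nat \<Rightarrow> nat"
    and S :: "real \<Rightarrow> (nat \<times> int) option" and i :: nat and \<alpha> \<beta> :: real and N :: nat
  assumes "valid_fp_schedule n p c a prio S"
    and "i < n"
    and "busy_interval S \<alpha> \<beta>"
  shows "(max (real N * p i - c i) 0 \<le> \<beta> - \<alpha> \<and> \<beta> - \<alpha> < real N * p i + c i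
            \<longrightarrow> jobs_in p a i \<alpha> \<beta> = N)
       \<and> (real N * p i + c i \<le> \<beta> - \<alpha> \<and> \<beta> - \<alpha> < real (N + 1) * p i - c i
            \<longrightarrow> jobs_in p a i \<alpha> \<beta> = N \<or> jobs_in p a i \<alpha> \<beta> = N + 1)"
proof (intro conjI impI)
  note lower = jobs_in_ge_if_busy_interval_length[OF assms]
  note upper = busy_interval_length_ge_if_jobs_in[OF assms]
  have c: "0 < c i" using assms(1,2) unfolding valid_fp_schedule_def by auto
  {
    assume l: "max (real N * p i - c i) 0 \<le> \<beta> - \<alpha> \<and> \<beta> - \<alpha> < real N * p i + c i"
    have "N \<le> jobs_in p a i \<alpha> \<beta>" using lower l by simp
    moreover have "\<not> N + 1 \<le> jobs_in p a i \<alpha> \<beta>" using upper[of N] l by linarith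
    ultimately show "jobs_in p a i \<alpha> \<beta> = N" by simp
  next
    assume l: "real N * p i + c i \<le> \<beta> - \<alpha> \<and> \<beta> - \<alpha> < real (N + 1) * p i - c i"
    have "N \<le> jobs_in p a i \<alpha> \<beta>" using lower l c by simp
    moreover have "\<not> N + 2 \<le> jobs_in p a i \<alpha> \<beta>"
      using upper[of "N + 1"] l c by (auto simp: algebra_simps)
    ultimately show "jobs_in p a i \<alpha> \<beta> = N \<or> jobs_in p a i \<alpha> \<beta> = N + 1" by linarith
  }
qed

end
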